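(* Let $\beta_1,\beta_2,\gamma,\rho_1,\rho_2>0$, let $\sigma_1,\sigma_2>0$ with $\sigma_1+\sigma_2=1$, let $q\in[0,1]$ and $T>0$. Let $s_0,e_0,i_0,j_0>0$ and $r_0\ge 0$ satisfy $s_0+e_0+i_0+j_0+r_0=1$. Consider the system \[ \begin{aligned} s'&=-s\,(\beta_1 i+\beta_2 j),\\ e'&=s\,(\beta_1 i+\beta_2 j)-\gamma e,\\ i'&=\sigma_1\gamma e-\rho_1 i,\\ j'&=\sigma_2\gamma e-\rho_2 j,\\ r'&=\rho_1 i+(1-q)\rho_2 j,\\ n'&=-q\rho_2 j, \end{aligned} \] on $[0,T]$ with initial conditions $s(0)=s_0$, $e(0)=e_0$, $i(0)=i_0$, $j(0)=j_0$, $r(0)=r_0$, $n(0)=1$. Let $s(t),e(t),i(t),j(t),r(t),n(t)$ be solutions of this system with these initial conditions. Then these solutions are defined on the entire interval $[0,T]$, and for all $t\in(0,T]$ they are positive and bounded. *)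

theory Defs
  imports "HOL-Analysis.Analysis"
begin

definition seijrn_solution ::
  "real \<Rightarrow> real \<Rightarrow> real \<Rightarrow> real \<Rightarrow> real \<Rightarrow> real \<Rightarrow> real \<Rightarrow> real \<Rightarrow> real \<Rightarrow> real \<Rightarrow>
   real \<Rightarrow> real \<Rightarrow> real \<Rightarrow> real \<Rightarrow>
   (real \<Rightarrow> real) \<Rightarrow> (real \<Rightarrow> real) \<Rightarrow> (real \<Rightarrow> real) \<Rightarrow> (real \<Rightarrow> real) \<Rightarrow>
   (real \<Rightarrow> real) \<Rightarrow> (real \<Rightarrow> real) \<Rightarrow> bool" where
  "seijrn_solution \<beta>1 \<beta>2 \<gamma> \<rho>1 \<rho>2 \<sigma>1 \<sigma>2 q T s0 e0 i0 j0 r0 s e i j r n \<longleftrightarrow>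
     s 0 = s0 \<and> e 0 = e0 \<and> i 0 = i0 \<and> j 0 = j0 \<and> r 0 = r0 \<and> n 0 = 1 \<and>
     (\<forall>t\<in>{0..T}.
        (s has_real_derivative (- s t * (\<beta>1 * i t + \<beta>2 * j t))) (at t within {0..T}) \<and>
        (e has_real_derivative (s t * (\<beta>1 * i t + \<beta>2 * j t) - \<gamma> * e t)) (at t within {0..T}) \<and>
        (i has_real_derivative (\<sigma>1 * \<gamma> * e t - \<rho>1 * i t)) (at t within {0..T}) \<and>
        (j has_real_derivative (\<sigma>2 * \<gamma> * e t - \<rho>2 * j t)) (at t within {0..T}) \<and>
        (r has_real_derivative (\<rho>1 * i t + (1 - q) * \<rho>2 * j t)) (at t within {0..T}) \<and>
        (n has_real_derivative (- q * \<rho>2 * j t)) (at t within {0..T}))"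

end

(* The (s, e, i, j)-subsystem does not involve r and n, which are afterwards obtained by
   integration. Its vector field is only locally Lipschitz, so we first solve the system in which
   s, i, j are clamped to [0, 1] inside the incidence term s (beta1 i + beta2 j): that field is
   globally Lipschitz, and the global Picard-Lindelof theorem (some iterate of the Picard operator
   on bounded continuous functions is a contraction) gives a solution on [0, T]. Along any
   solution each component x satisfies x' >= - M x as long as all components are positive, so none
   of them can be the first to reach 0; and (s + e + i + j)' = - rho1 i - rho2 j <= 0 keeps them
   below 1, so the clamp is inactive and the clamped solution solves the original system.
   For an arbitrary solution the same positivity argument applies, r' > 0 makes r positive, and
   since sigma1 + sigma2 = 1 the difference n - (s + e + i + j + r) is constant, hence zero; as
   n' = - q rho2 j <= 0, all six components lie in (0, 1] on (0, T]. *)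

theory Submission
  imports Defs
begin

section \<open>Sign of solutions of differential inequalities\<close>

lemma has_real_derivative_nonneg_imp_le:
  fixes f f' :: "real \<Rightarrow> real"
  assumes der: "\<And>t. t \<in> {a..b} \<Longrightarrow> (f has_real_derivative f' t) (at t within {a..b})"
    and nonneg: "\<And>t. x < t \<Longrightarrow> t < y \<Longrightarrow> 0 \<le> f' t"
    and "a \<le> x" "x \<le> y" "y \<le> b"
  shows "f x \<le> f y"
proof (rule DERIV_nonneg_imp_increasing_open[OF \<open>x \<le> y\<close>])
  show "continuous_on {x..y} f"
    using DERIV_continuous_on[OF der] by (rule continuous_on_subset) (use assms in auto)
  fix t assume t: "x < t" "t < y"
  then have "at t within {a..b} = at t"
    using assms by (intro at_within_Icc_at) auto
  then show "\<exists>d. (f has_real_derivative d) (at t) \<and> 0 \<le> d"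
    using der[of t] nonneg[OF t] t assms by auto
qed

lemma has_real_derivative_pos_imp_less:
  fixes f f' :: "real \<Rightarrow> real"
  assumes der: "\<And>t. t \<in> {a..b} \<Longrightarrow> (f has_real_derivative f' t) (at t within {a..b})"
    and pos: "\<And>t. x < t \<Longrightarrow> t < y \<Longrightarrow> 0 < f' t"
    and "a \<le> x" "x < y" "y \<le> b"
  shows "f x < f y"
proof (rule DERIV_pos_imp_increasing_open[OF \<open>x < y\<close>])
  show "continuous_on {x..y} f"
    using DERIV_continuous_on[OF der] by (rule continuous_on_subset) (use assms in auto)
  fix t assume t: "x < t" "t < y"
  then have "at t within {a..b} = at t"
    using assms by (intro at_within_Icc_at) auto
  then show "\<exists>d. (f has_real_derivative d) (at t) \<and> 0 < d"
    using der[of t] pos[OF t] t assms by auto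
qed

lemma has_real_derivative_nonpos_imp_ge:
  fixes f f' :: "real \<Rightarrow> real"
  assumes der: "\<And>t. t \<in> {a..b} \<Longrightarrow> (f has_real_derivative f' t) (at t within {a..b})"
    and nonpos: "\<And>t. x < t \<Longrightarrow> t < y \<Longrightarrow> f' t \<le> 0"
    and "a \<le> x" "x \<le> y" "y \<le> b"
  shows "f y \<le> f x"
  using has_real_derivative_nonneg_imp_le[of a b "\<lambda>t. - f t" "\<lambda>t. - f' t" x y]
    DERIV_minus[OF der] nonpos assms by force

lemma has_real_derivative_ge_linear_imp_exp_lower_bound:
  fixes f f' :: "real \<Rightarrow> real"
  assumes der: "\<And>t. t \<in> {a..b} \<Longrightarrow> (f has_real_derivative f' t) (at t within {a..b})"
    and lower: "\<And>t. x < t \<Longrightarrow> t < y \<Longrightarrow> - M * f t \<le> f' t"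
    and "a \<le> x" "x \<le> y" "y \<le> b"
  shows "f x * exp (M * (x - y)) \<le> f y"
proof -
  have "f x * exp (M * x) \<le> f y * exp (M * y)"
  proof (rule has_real_derivative_nonneg_imp_le[where f = "\<lambda>t. f t * exp (M * t)"])
    show "((\<lambda>t. f t * exp (M * t)) has_real_derivative (f' t + M * f t) * exp (M * t))
        (at t within {a..b})" if "t \<in> {a..b}" for t
      by (rule derivative_eq_intros der[OF that] refl)+ (simp add: algebra_simps)
    show "0 \<le> (f' t + M * f t) * exp (M * t)" if "x < t" "t < y" for t
      using lower[OF that] by simp
  qed (use assms in auto)
  then have "f x * exp (M * x) * exp (- M * y) \<le> f y * exp (M * y) * exp (- M * y)"
    by (rule mult_right_mono) simp
  then show ?thesis
    by (simp add: mult.assoc exp_add[symmetric] algebra_simps)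
qed

text \<open>At the first time some component vanishes, all components were positive before, so the
  exponential lower bound keeps that component positive.\<close>

lemma positive_orthant_forward_invariant:
  fixes x x' :: "'k \<Rightarrow> real \<Rightarrow> real"
  assumes "finite K"
    and der: "\<And>k t. k \<in> K \<Longrightarrow> t \<in> {0..T} \<Longrightarrow>
      (x k has_real_derivative x' k t) (at t within {0..T})"
    and lower: "\<And>k t. k \<in> K \<Longrightarrow> t \<in> {0..T} \<Longrightarrow> (\<forall>m\<in>K. 0 < x m t) \<Longrightarrow>
      - M * x k t \<le> x' k t"
    and init: "\<And>k. k \<in> K \<Longrightarrow> 0 < x k 0"
    and "t \<in> {0..T}" "k \<in> K"
  shows "0 < x k t"
proof (rule ccontr)
  define Z where "Z = (\<Union>k\<in>K. {0..T} \<inter> x k -` {..0})"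
  assume "\<not> 0 < x k t"
  then have "t \<in> Z" using assms by (force simp: Z_def)
  moreover have "closed Z"
    unfolding Z_def using der
    by (intro closed_UN \<open>finite K\<close> ballI continuous_closed_preimage DERIV_continuous_on) auto
  moreover have Z_bdd: "bdd_below Z"
    by (auto simp: Z_def intro!: bdd_belowI[of _ 0])
  ultimately have "Inf Z \<in> Z"
    using closed_contains_Inf by blast
  then obtain k0 where k0: "k0 \<in> K" "Inf Z \<in> {0..T}" "x k0 (Inf Z) \<le> 0"
    by (auto simp: Z_def)
  have before: "\<forall>m\<in>K. 0 < x m u" if "0 \<le> u" "u < Inf Z" for u
    using cInf_lower[OF _ Z_bdd, of u] that k0 by (force simp: Z_def)
  have "x k0 0 * exp (M * (0 - Inf Z)) \<le> x k0 (Inf Z)"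
  proof (rule has_real_derivative_ge_linear_imp_exp_lower_bound[OF der[OF k0(1)]])
    show "- M * x k0 u \<le> x' k0 u" if "0 < u" "u < Inf Z" for u
      using lower[OF k0(1) _ before] that k0(2) by auto
  qed (use k0 in auto)
  moreover have "0 < x k0 0 * exp (M * (0 - Inf Z))"
    using init[OF k0(1)] by simp
  ultimately show False using k0(3) by simp
qed

section \<open>The global Picard-Lindelof theorem\<close>

lemma clamp_real_in_Icc: "a \<le> b \<Longrightarrow> clamp a b (x::real) \<in> {a..b}"
  using clamp_in_interval[of a b x] by simp

lemma clamp_real_cancel: "x \<in> {a..b} \<Longrightarrow> clamp a b (x::real) = x"
  by (rule clamp_cancel_cbox) (simp add: cbox_interval)

lemma clamp_unit_bounds: "0 \<le> clamp 0 1 (y::real)" "clamp 0 1 y \<le> 1"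
  using clamp_real_in_Icc[of 0 1 y] by auto

lemma clamp_unit_le: "0 \<le> y \<Longrightarrow> clamp 0 1 y \<le> (y::real)"
  using clamp_unit_bounds[of y] clamp_real_cancel[of y 0 1] by (cases "y \<le> 1") auto

lemma has_integral_power_div_fact:
  fixes p :: real
  assumes "0 \<le> p"
  shows "((\<lambda>u. u ^ k / fact k) has_integral p ^ Suc k / fact (Suc k)) {0..p}"
proof -
  have "((\<lambda>u. u ^ Suc k / fact (Suc k)) has_real_derivative u ^ k / fact k) (at u within {0..p})"
    for u :: real
    using DERIV_divide[OF DERIV_pow[of "Suc k" u] DERIV_const[of "fact (Suc k)"]]
    by (simp add: fact_reduce)
  then show ?thesis
    using fundamental_theorem_of_calculus[OF assms, of "\<lambda>u. u ^ Suc k / fact (Suc k)"]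
    by (simp add: has_real_derivative_iff_has_vector_derivative)
qed

lemma ex_power_div_fact_less_one: "\<exists>k. x ^ k / fact k < (1::real)"
proof -
  have "(\<lambda>k. inverse (fact k) * x ^ k) \<longlonglongrightarrow> 0"
    by (rule summable_LIMSEQ_zero[OF summable_exp])
  then have "\<forall>\<^sub>F k in sequentially. inverse (fact k) * x ^ k < 1"
    by (rule order_tendstoD) simp
  then obtain k where "inverse (fact k) * x ^ k < 1"
    using eventually_sequentially by auto
  then show ?thesis
    by (auto simp: divide_inverse mult.commute)
qed

context
  fixes F :: "'a::banach \<Rightarrow> 'a" and L T :: real and x0 :: 'a
  assumes F_lipschitz: "L-lipschitz_on UNIV F" and T_nonneg: "0 \<le> T"
begin

text \<open>Time is clamped to \<open>[0, T]\<close> so that the Picard iterate of a function is a bounded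
  continuous function on the whole real line.\<close>

definition picard_step :: "(real \<Rightarrow> 'a) \<Rightarrow> real \<Rightarrow> 'a"
  where "picard_step \<phi> t = x0 + integral {0..clamp 0 T t} (\<lambda>u. F (\<phi> u))"

lemma continuous_on_compose_field: "continuous_on S \<phi> \<Longrightarrow> continuous_on S (\<lambda>u. F (\<phi> u))"
  using lipschitz_on_continuous_on[OF F_lipschitz] continuous_on_compose2 by blast

lemma picard_step_bcontfun:
  assumes "continuous_on {0..T} \<phi>"
  shows "picard_step \<phi> \<in> bcontfun"
proof -
  define I where "I s = x0 + integral {0..s} (\<lambda>u. F (\<phi> u))" for s
  have I: "continuous_on (cbox 0 T) I"
    unfolding I_def cbox_interval
    by (intro continuous_intros indefinite_integral_continuous_1 integrable_continuous_interval
        continuous_on_compose_field assms)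
  have "picard_step \<phi> = (\<lambda>t. I (clamp 0 T t))"
    by (simp add: picard_step_def I_def fun_eq_iff)
  moreover have "bounded (I ` cbox 0 T)"
    by (intro compact_imp_bounded compact_continuous_image I compact_cbox)
  ultimately show ?thesis
    using clamp_continuous_on[OF I] clamp_bounded[of I 0 T] by (simp add: bcontfun_def)
qed

definition picard_op :: "(real \<Rightarrow>\<^sub>C 'a) \<Rightarrow> (real \<Rightarrow>\<^sub>C 'a)"
  where "picard_op \<phi> = Bcontfun (picard_step (apply_bcontfun \<phi>))"

lemma apply_picard_op: "apply_bcontfun (picard_op \<phi>) = picard_step (apply_bcontfun \<phi>)"
  unfolding picard_op_def
  by (intro Bcontfun_inverse picard_step_bcontfun continuous_on_apply_bcontfun)

lemma picard_op_iterate_norm_diff: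
  "norm ((picard_op ^^ k) \<phi> t - (picard_op ^^ k) \<psi> t)
     \<le> (L * clamp 0 T t) ^ k / fact k * dist \<phi> \<psi>"
proof (induction k arbitrary: t)
  case 0
  then show ?case using dist_bounded[of \<phi> t \<psi>] by (simp add: dist_norm)
next
  case (Suc k)
  define a where "a = (picard_op ^^ k) \<phi>"
  define b where "b = (picard_op ^^ k) \<psi>"
  define p where "p = clamp 0 T t"
  define C where "C = L ^ Suc k * dist \<phi> \<psi>"
  have p: "0 \<le> p" "p \<le> T" using clamp_real_in_Icc[OF T_nonneg] by (auto simp: p_def)
  have integrable: "(\<lambda>u. F (apply_bcontfun f u)) integrable_on {0..p}" for f
    by (intro integrable_continuous_interval continuous_on_compose_field continuous_on_apply_bcontfun)
  have "(picard_op ^^ Suc k) \<phi> t - (picard_op ^^ Suc k) \<psi> t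
      = integral {0..p} (\<lambda>u. F (a u)) - integral {0..p} (\<lambda>u. F (b u))"
    by (simp add: a_def b_def p_def apply_picard_op picard_step_def)
  then have "norm ((picard_op ^^ Suc k) \<phi> t - (picard_op ^^ Suc k) \<psi> t)
      = norm (integral {0..p} (\<lambda>u. F (a u) - F (b u)))"
    by (simp add: a_def b_def integral_diff[OF integrable integrable])
  also have "\<dots> \<le> integral {0..p} (\<lambda>u. C * (u ^ k / fact k))"
  proof (rule integral_norm_bound_integral)
    show "(\<lambda>u. F (a u) - F (b u)) integrable_on {0..p}"
      using integrable by (intro integrable_diff)
    show "(\<lambda>u. C * (u ^ k / fact k)) integrable_on {0..p}"
      by (intro integrable_continuous_interval continuous_intros) simp
  next
    fix u assume u: "u \<in> {0..p}"
    then have "clamp 0 T u = u" using p by (intro clamp_real_cancel) auto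
    then have "L * norm (a u - b u) \<le> L * ((L * u) ^ k / fact k * dist \<phi> \<psi>)"
      using Suc.IH[of u] lipschitz_on_nonneg[OF F_lipschitz]
      by (intro mult_left_mono) (auto simp: a_def b_def)
    also have "\<dots> = C * (u ^ k / fact k)"
      by (simp add: C_def power_mult_distrib)
    finally show "norm (F (a u) - F (b u)) \<le> C * (u ^ k / fact k)"
      using lipschitz_on_normD[OF F_lipschitz, of "a u" "b u"] by simp
  qed
  also have "\<dots> = C * (p ^ Suc k / fact (Suc k))"
    using has_integral_mult_right[OF has_integral_power_div_fact[OF p(1)], of C]
    by (rule integral_unique)
  also have "\<dots> = (L * clamp 0 T t) ^ Suc k / fact (Suc k) * dist \<phi> \<psi>"
    by (simp add: C_def p_def power_mult_distrib)
  finally show ?case .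
qed

lemma picard_op_iterate_dist:
  "dist ((picard_op ^^ k) \<phi>) ((picard_op ^^ k) \<psi>) \<le> (L * T) ^ k / fact k * dist \<phi> \<psi>"
proof (rule dist_bound)
  fix t
  have "(L * clamp 0 T t) ^ k \<le> (L * T) ^ k"
    using clamp_real_in_Icc[OF T_nonneg, of t] lipschitz_on_nonneg[OF F_lipschitz]
    by (intro power_mono mult_left_mono) auto
  then have "(L * clamp 0 T t) ^ k / fact k * dist \<phi> \<psi> \<le> (L * T) ^ k / fact k * dist \<phi> \<psi>"
    by (intro mult_right_mono divide_right_mono) auto
  then show "dist ((picard_op ^^ k) \<phi> t) ((picard_op ^^ k) \<psi> t) \<le> (L * T) ^ k / fact k * dist \<phi> \<psi>"
    using picard_op_iterate_norm_diff[of k \<phi> t \<psi>] by (simp add: dist_norm)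
qed

lemma picard_op_fixed_point: "\<exists>\<phi>. picard_op \<phi> = \<phi>"
proof -
  obtain k where k: "(L * T) ^ k / fact k < 1"
    using ex_power_div_fact_less_one by blast
  have "0 \<le> (L * T) ^ k / fact k"
    using lipschitz_on_nonneg[OF F_lipschitz] T_nonneg by simp
  then have "\<exists>!\<phi>. (picard_op ^^ k) \<phi> = \<phi>"
    using k picard_op_iterate_dist by (intro banach_fix_type) auto
  then obtain \<phi> where \<phi>: "(picard_op ^^ k) \<phi> = \<phi>"
    and unique: "\<And>\<psi>. (picard_op ^^ k) \<psi> = \<psi> \<Longrightarrow> \<psi> = \<phi>"
    by blast
  have "(picard_op ^^ k) (picard_op \<phi>) = picard_op \<phi>"
    by (metis \<phi> funpow_swap1)
  then show ?thesis using unique by blast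
qed

end

lemma picard_lindelof_global:
  fixes F :: "'a::banach \<Rightarrow> 'a"
  assumes "L-lipschitz_on UNIV F" and "0 \<le> T"
  obtains x where "x 0 = x0"
    and "\<And>t. t \<in> {0..T} \<Longrightarrow> (x has_vector_derivative F (x t)) (at t within {0..T})"
proof -
  obtain \<phi> where \<phi>: "picard_op F T x0 \<phi> = \<phi>"
    using picard_op_fixed_point[OF assms] ..
  define x where "x = apply_bcontfun \<phi>"
  have x: "x t = x0 + integral {0..t} (\<lambda>u. F (x u))" if "t \<in> {0..T}" for t
    using arg_cong[OF \<phi>, of apply_bcontfun, THEN fun_cong, of t]
    by (simp add: apply_picard_op[OF assms] picard_step_def[OF assms] clamp_real_cancel[OF that] x_def)
  show ?thesis
  proof
    show "x 0 = x0" using x[of 0] assms(2) by simp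
    fix t assume t: "t \<in> {0..T}"
    have "continuous_on {0..T} (\<lambda>u. F (x u))"
      unfolding x_def by (intro continuous_on_compose_field[OF assms] continuous_on_apply_bcontfun)
    then have "((\<lambda>t. x0 + integral {0..t} (\<lambda>u. F (x u))) has_vector_derivative F (x t))
        (at t within {0..T})"
      using has_vector_derivative_add[OF has_vector_derivative_const
          integral_has_vector_derivative[OF _ t]]
      by simp
    then show "(x has_vector_derivative F (x t)) (at t within {0..T})"
      using has_vector_derivative_transform[OF t, of x "\<lambda>t. x0 + integral {0..t} (\<lambda>u. F (x u))"] x
      by blast
  qed
qed

section \<open>The SEIJ subsystem\<close>

lemma seij_positive:
  fixes s e i j \<phi> :: "real \<Rightarrow> real"
  assumes "0 \<le> \<gamma>" "0 \<le> \<sigma>1" "0 \<le> \<sigma>2"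
    and ds: "\<And>t. t \<in> {0..T} \<Longrightarrow> (s has_real_derivative - \<phi> t) (at t within {0..T})"
    and de: "\<And>t. t \<in> {0..T} \<Longrightarrow> (e has_real_derivative \<phi> t - \<gamma> * e t) (at t within {0..T})"
    and di: "\<And>t. t \<in> {0..T} \<Longrightarrow>
      (i has_real_derivative \<sigma>1 * \<gamma> * e t - \<rho>1 * i t) (at t within {0..T})"
    and dj: "\<And>t. t \<in> {0..T} \<Longrightarrow>
      (j has_real_derivative \<sigma>2 * \<gamma> * e t - \<rho>2 * j t) (at t within {0..T})"
    and \<phi>: "\<And>t. t \<in> {0..T} \<Longrightarrow> 0 < s t \<Longrightarrow> 0 < e t \<Longrightarrow> 0 < i t \<Longrightarrow> 0 < j t \<Longrightarrow>
      0 \<le> \<phi> t \<and> \<phi> t \<le> M * s t"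
    and "0 < s 0" "0 < e 0" "0 < i 0" "0 < j 0"
    and "t \<in> {0..T}"
  shows "0 < s t \<and> 0 < e t \<and> 0 < i t \<and> 0 < j t"
proof -
  define x where "x = (!) [s, e, i, j]"
  define x' where "x' = (!) [\<lambda>t. - \<phi> t, \<lambda>t. \<phi> t - \<gamma> * e t,
    \<lambda>t. \<sigma>1 * \<gamma> * e t - \<rho>1 * i t, \<lambda>t. \<sigma>2 * \<gamma> * e t - \<rho>2 * j t]"
  define C where "C = \<bar>M\<bar> + \<gamma> + \<bar>\<rho>1\<bar> + \<bar>\<rho>2\<bar>"
  have "0 < x k t" if "k \<in> {0, 1, 2, 3}" for k
  proof (rule positive_orthant_forward_invariant[where K = "{0, 1, 2, 3}" and T = T and x = x
        and x' = x' and M = C])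
    show "(x k has_real_derivative x' k u) (at u within {0..T})"
      if "k \<in> {0, 1, 2, 3}" "u \<in> {0..T}" for k u
      using that ds de di dj by (auto simp: x_def x'_def)
    show "- C * x k u \<le> x' k u"
      if "k \<in> {0, 1, 2, 3}" "u \<in> {0..T}" "\<forall>m\<in>{0, 1, 2, 3}. 0 < x m u" for k u
    proof -
      have pos: "0 < s u" "0 < e u" "0 < i u" "0 < j u"
        using that(3) by (auto simp: x_def)
      have "M * s u \<le> C * s u"
        using pos(1) assms(1) unfolding C_def by (intro mult_right_mono) auto
      then have "\<phi> u \<le> C * s u"
        using \<phi>[OF that(2) pos] by linarith
      moreover have "\<gamma> * e u \<le> C * e u" "\<bar>\<rho>1\<bar> * i u \<le> C * i u" "\<bar>\<rho>2\<bar> * j u \<le> C * j u"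
        using pos assms(1) unfolding C_def by (intro mult_right_mono; simp)+
      moreover have "0 \<le> \<sigma>1 * \<gamma> * e u" "0 \<le> \<sigma>2 * \<gamma> * e u" "0 \<le> \<phi> u"
        using pos assms(1-3) \<phi>[OF that(2) pos] by simp_all
      moreover have "- \<bar>\<rho>1\<bar> * i u \<le> - \<rho>1 * i u" "- \<bar>\<rho>2\<bar> * j u \<le> - \<rho>2 * j u"
        using pos by (simp_all add: mult_right_mono)
      ultimately show ?thesis
        using that(1) by (auto simp: x_def x'_def)
    qed
  qed (use assms that in \<open>auto simp: x_def\<close>)
  from this[of 0] this[of 1] this[of 2] this[of 3] show ?thesis
    by (simp add: x_def)
qed

lemma seij_total_le_initial:
  fixes s e i j \<phi> :: "real \<Rightarrow> real"
  assumes "\<sigma>1 + \<sigma>2 = 1" "0 \<le> \<rho>1" "0 \<le> \<rho>2"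
    and ds: "\<And>t. t \<in> {0..T} \<Longrightarrow> (s has_real_derivative - \<phi> t) (at t within {0..T})"
    and de: "\<And>t. t \<in> {0..T} \<Longrightarrow> (e has_real_derivative \<phi> t - \<gamma> * e t) (at t within {0..T})"
    and di: "\<And>t. t \<in> {0..T} \<Longrightarrow>
      (i has_real_derivative \<sigma>1 * \<gamma> * e t - \<rho>1 * i t) (at t within {0..T})"
    and dj: "\<And>t. t \<in> {0..T} \<Longrightarrow>
      (j has_real_derivative \<sigma>2 * \<gamma> * e t - \<rho>2 * j t) (at t within {0..T})"
    and ij: "\<And>t. t \<in> {0..T} \<Longrightarrow> 0 \<le> i t \<and> 0 \<le> j t"
    and "t \<in> {0..T}"
  shows "s t + e t + i t + j t \<le> s 0 + e 0 + i 0 + j 0"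
proof (rule has_real_derivative_nonpos_imp_ge[where f = "\<lambda>t. s t + e t + i t + j t"])
  have "\<sigma>1 * \<gamma> * e u + \<sigma>2 * \<gamma> * e u = \<gamma> * e u" for u
    using assms(1) by (metis distrib_right mult_1 mult.assoc)
  then show "((\<lambda>t. s t + e t + i t + j t) has_real_derivative - \<rho>1 * i u - \<rho>2 * j u)
      (at u within {0..T})" if "u \<in> {0..T}" for u
    using ds[OF that] de[OF that] di[OF that] dj[OF that]
    by (auto intro!: derivative_eq_intros simp: algebra_simps)
  show "- \<rho>1 * i u - \<rho>2 * j u \<le> 0" if "0 < u" "u < t" for u
  proof -
    have "0 \<le> \<rho>1 * i u" "0 \<le> \<rho>2 * j u"
      using ij[of u] that \<open>t \<in> {0..T}\<close> assms(2,3) by auto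
    then show ?thesis by simp
  qed
qed (use assms in auto)

lemma lipschitz_on_fst_comp [lipschitz_intros]:
  "L-lipschitz_on U f \<Longrightarrow> L-lipschitz_on U (\<lambda>x. fst (f x))"
  by (auto simp: lipschitz_on_def intro: order_trans[OF dist_fst_le])

lemma lipschitz_on_snd_comp [lipschitz_intros]:
  "L-lipschitz_on U f \<Longrightarrow> L-lipschitz_on U (\<lambda>x. snd (f x))"
  by (auto simp: lipschitz_on_def intro: order_trans[OF dist_snd_le])

lemma lipschitz_on_clamp_comp [lipschitz_intros]:
  "L-lipschitz_on U f \<Longrightarrow> L-lipschitz_on U (\<lambda>x. clamp a b (f x))"
  by (auto simp: lipschitz_on_def intro: order_trans[OF dist_clamps_le_dist_args])

lemma lipschitz_on_mult_bounded:
  fixes f g :: "'a::metric_space \<Rightarrow> real"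
  assumes f: "Lf-lipschitz_on U f" and g: "Lg-lipschitz_on U g"
    and A: "0 \<le> A" "\<And>x. x \<in> U \<Longrightarrow> \<bar>f x\<bar> \<le> A"
    and B: "0 \<le> B" "\<And>x. x \<in> U \<Longrightarrow> \<bar>g x\<bar> \<le> B"
  shows "(B * Lf + A * Lg)-lipschitz_on U (\<lambda>x. f x * g x)"
proof (rule lipschitz_onI)
  fix x y assume xy: "x \<in> U" "y \<in> U"
  have "f x * g x - f y * g y = (f x - f y) * g x + f y * (g x - g y)"
    by (simp add: algebra_simps)
  then have "dist (f x * g x) (f y * g y) \<le> \<bar>f x - f y\<bar> * \<bar>g x\<bar> + \<bar>f y\<bar> * \<bar>g x - g y\<bar>"
    by (metis abs_mult abs_triangle_ineq dist_real_def)
  also have "\<dots> \<le> (Lf * dist x y) * B + A * (Lg * dist x y)"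
    using lipschitz_onD[OF f xy] lipschitz_onD[OF g xy] A B xy
    by (intro add_mono mult_mono) (auto simp: dist_real_def)
  finally show "dist (f x * g x) (f y * g y) \<le> (B * Lf + A * Lg) * dist x y"
    by (simp add: algebra_simps)
next
  show "0 \<le> B * Lf + A * Lg"
    using lipschitz_on_nonneg[OF f] lipschitz_on_nonneg[OF g] A B by simp
qed

lemma has_vector_derivative_fst:
  "(x has_vector_derivative v) F \<Longrightarrow> ((\<lambda>t. fst (x t)) has_vector_derivative fst v) F"
  by (auto simp: has_vector_derivative_def dest: has_derivative_fst)

lemma has_vector_derivative_snd:
  "(x has_vector_derivative v) F \<Longrightarrow> ((\<lambda>t. snd (x t)) has_vector_derivative snd v) F"
  by (auto simp: has_vector_derivative_def dest: has_derivative_snd)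

definition clamped_incidence :: "real \<Rightarrow> real \<Rightarrow> real \<Rightarrow> real \<Rightarrow> real \<Rightarrow> real" where
  "clamped_incidence \<beta>1 \<beta>2 s i j = clamp 0 1 s * (\<beta>1 * clamp 0 1 i + \<beta>2 * clamp 0 1 j)"

lemma clamped_incidence_bounds:
  assumes "0 \<le> \<beta>1" "0 \<le> \<beta>2" "0 \<le> s"
  shows "0 \<le> clamped_incidence \<beta>1 \<beta>2 s i j" "clamped_incidence \<beta>1 \<beta>2 s i j \<le> (\<beta>1 + \<beta>2) * s"
proof -
  have "0 \<le> \<beta>1 * clamp 0 1 i + \<beta>2 * clamp 0 1 j" "\<beta>1 * clamp 0 1 i + \<beta>2 * clamp 0 1 j \<le> \<beta>1 + \<beta>2"
    using clamp_unit_bounds[of i] clamp_unit_bounds[of j] assms(1,2)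
    by (auto intro!: add_mono mult_left_le)
  then show "0 \<le> clamped_incidence \<beta>1 \<beta>2 s i j" "clamped_incidence \<beta>1 \<beta>2 s i j \<le> (\<beta>1 + \<beta>2) * s"
    using clamp_unit_bounds[of s] clamp_unit_le[OF assms(3)]
    unfolding clamped_incidence_def by (auto intro: mult_mono simp: mult.commute)
qed

lemma clamped_incidence_unclamped:
  "s \<in> {0..1} \<Longrightarrow> i \<in> {0..1} \<Longrightarrow> j \<in> {0..1} \<Longrightarrow>
    clamped_incidence \<beta>1 \<beta>2 s i j = s * (\<beta>1 * i + \<beta>2 * j)"
  by (simp add: clamped_incidence_def clamp_real_cancel)

definition seij_clamped_field ::
  "real \<Rightarrow> real \<Rightarrow> real \<Rightarrow> real \<Rightarrow> real \<Rightarrow> real \<Rightarrow> real \<Rightarrow>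
    real \<times> real \<times> real \<times> real \<Rightarrow> real \<times> real \<times> real \<times> real" where
  "seij_clamped_field \<beta>1 \<beta>2 \<gamma> \<rho>1 \<rho>2 \<sigma>1 \<sigma>2 = (\<lambda>(s, e, i, j).
     let \<phi> = clamped_incidence \<beta>1 \<beta>2 s i j
     in (- \<phi>, \<phi> - \<gamma> * e, \<sigma>1 * \<gamma> * e - \<rho>1 * i, \<sigma>2 * \<gamma> * e - \<rho>2 * j))"

lemma seij_clamped_field_lipschitz:
  assumes "0 \<le> \<beta>1" "0 \<le> \<beta>2"
  shows "\<exists>L. L-lipschitz_on UNIV (seij_clamped_field \<beta>1 \<beta>2 \<gamma> \<rho>1 \<rho>2 \<sigma>1 \<sigma>2)"
proof -
  define \<phi> where "\<phi> v = clamped_incidence \<beta>1 \<beta>2 (fst v) (fst (snd (snd v))) (snd (snd (snd v)))"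
    for v :: "real \<times> real \<times> real \<times> real"
  have bounds: "\<bar>clamp 0 1 a\<bar> \<le> 1" "\<bar>\<beta>1 * clamp 0 1 a + \<beta>2 * clamp 0 1 b\<bar> \<le> \<beta>1 + \<beta>2"
    for a b :: real
    using clamp_unit_bounds[of a] clamp_unit_bounds[of b] assms
    by (auto intro!: add_mono mult_left_le)
  have "\<exists>L. L-lipschitz_on UNIV \<phi>"
    unfolding \<phi>_def clamped_incidence_def
    by (rule exI, rule lipschitz_on_mult_bounded[where A = 1 and B = "\<beta>1 + \<beta>2"])
      (use assms bounds in \<open>auto intro!: lipschitz_intros\<close>)
  then obtain L where "L-lipschitz_on UNIV \<phi>" ..
  show ?thesis
    unfolding seij_clamped_field_def split_beta' Let_def \<phi>_def[symmetric]
    by (rule exI) (rule lipschitz_on_Pair lipschitz_on_minus lipschitz_on_diff lipschitz_on_cmult_real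
        lipschitz_on_fst_comp lipschitz_on_snd_comp lipschitz_on_id \<open>L-lipschitz_on UNIV \<phi>\<close>)+
qed

lemma seij_clamped_solution_exists:
  fixes \<beta>1 \<beta>2 \<gamma> \<rho>1 \<rho>2 \<sigma>1 \<sigma>2 T s0 e0 i0 j0 :: real
  assumes "0 \<le> \<beta>1" "0 \<le> \<beta>2" "0 \<le> T"
  obtains s e i j where "s 0 = s0" "e 0 = e0" "i 0 = i0" "j 0 = j0"
    and "\<And>t. t \<in> {0..T} \<Longrightarrow>
      (s has_real_derivative - clamped_incidence \<beta>1 \<beta>2 (s t) (i t) (j t)) (at t within {0..T})"
    and "\<And>t. t \<in> {0..T} \<Longrightarrow>
      (e has_real_derivative clamped_incidence \<beta>1 \<beta>2 (s t) (i t) (j t) - \<gamma> * e t) (at t within {0..T})"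
    and "\<And>t. t \<in> {0..T} \<Longrightarrow>
      (i has_real_derivative \<sigma>1 * \<gamma> * e t - \<rho>1 * i t) (at t within {0..T})"
    and "\<And>t. t \<in> {0..T} \<Longrightarrow>
      (j has_real_derivative \<sigma>2 * \<gamma> * e t - \<rho>2 * j t) (at t within {0..T})"
proof -
  define F where "F = seij_clamped_field \<beta>1 \<beta>2 \<gamma> \<rho>1 \<rho>2 \<sigma>1 \<sigma>2"
  obtain L where "L-lipschitz_on UNIV F"
    using seij_clamped_field_lipschitz[OF assms(1,2), of \<gamma> \<rho>1 \<rho>2 \<sigma>1 \<sigma>2] unfolding F_def by blast
  then obtain x where x0: "x 0 = (s0, e0, i0, j0)"
    and x': "\<And>t. t \<in> {0..T} \<Longrightarrow> (x has_vector_derivative F (x t)) (at t within {0..T})"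
    using picard_lindelof_global[OF _ \<open>0 \<le> T\<close>] by metis
  define s where "s = (\<lambda>t. fst (x t))"
  define e where "e = (\<lambda>t. fst (snd (x t)))"
  define i where "i = (\<lambda>t. fst (snd (snd (x t))))"
  define j where "j = (\<lambda>t. snd (snd (snd (x t))))"
  have "x t = (s t, e t, i t, j t)" for t
    by (simp add: s_def e_def i_def j_def)
  then have Fx: "F (x t) = (- clamped_incidence \<beta>1 \<beta>2 (s t) (i t) (j t),
      clamped_incidence \<beta>1 \<beta>2 (s t) (i t) (j t) - \<gamma> * e t,
      \<sigma>1 * \<gamma> * e t - \<rho>1 * i t, \<sigma>2 * \<gamma> * e t - \<rho>2 * j t)" for t
    by (simp add: F_def seij_clamped_field_def Let_def)
  show ?thesis
  proof (rule that)
    show "s 0 = s0" "e 0 = e0" "i 0 = i0" "j 0 = j0"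
      by (simp_all add: s_def e_def i_def j_def x0)
    fix t assume "t \<in> {0..T}"
    note x_t = x'[OF this, unfolded Fx]
    note snd_x_t = has_vector_derivative_snd[OF x_t]
    note snd_snd_x_t = has_vector_derivative_snd[OF snd_x_t]
    show "(s has_real_derivative - clamped_incidence \<beta>1 \<beta>2 (s t) (i t) (j t)) (at t within {0..T})"
      using has_vector_derivative_fst[OF x_t]
      by (simp add: s_def has_real_derivative_iff_has_vector_derivative)
    show "(e has_real_derivative clamped_incidence \<beta>1 \<beta>2 (s t) (i t) (j t) - \<gamma> * e t)
        (at t within {0..T})"
      using has_vector_derivative_fst[OF snd_x_t]
      by (simp add: e_def has_real_derivative_iff_has_vector_derivative)
    show "(i has_real_derivative \<sigma>1 * \<gamma> * e t - \<rho>1 * i t) (at t within {0..T})"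
      using has_vector_derivative_fst[OF snd_snd_x_t]
      by (simp add: i_def has_real_derivative_iff_has_vector_derivative)
    show "(j has_real_derivative \<sigma>2 * \<gamma> * e t - \<rho>2 * j t) (at t within {0..T})"
      using has_vector_derivative_snd[OF snd_snd_x_t]
      by (simp add: j_def has_real_derivative_iff_has_vector_derivative)
  qed
qed

lemma seij_solution_exists:
  fixes \<beta>1 \<beta>2 \<gamma> \<rho>1 \<rho>2 \<sigma>1 \<sigma>2 T s0 e0 i0 j0 :: real
  assumes "0 \<le> \<beta>1" "0 \<le> \<beta>2" "0 \<le> \<gamma>" "0 \<le> \<rho>1" "0 \<le> \<rho>2"
    and "0 \<le> \<sigma>1" "0 \<le> \<sigma>2" "\<sigma>1 + \<sigma>2 = 1" "0 \<le> T"
    and "0 < s0" "0 < e0" "0 < i0" "0 < j0" "s0 + e0 + i0 + j0 \<le> 1"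
  obtains s e i j where "s 0 = s0" "e 0 = e0" "i 0 = i0" "j 0 = j0"
    and "\<And>t. t \<in> {0..T} \<Longrightarrow>
      (s has_real_derivative - s t * (\<beta>1 * i t + \<beta>2 * j t)) (at t within {0..T})"
    and "\<And>t. t \<in> {0..T} \<Longrightarrow>
      (e has_real_derivative s t * (\<beta>1 * i t + \<beta>2 * j t) - \<gamma> * e t) (at t within {0..T})"
    and "\<And>t. t \<in> {0..T} \<Longrightarrow>
      (i has_real_derivative \<sigma>1 * \<gamma> * e t - \<rho>1 * i t) (at t within {0..T})"
    and "\<And>t. t \<in> {0..T} \<Longrightarrow>
      (j has_real_derivative \<sigma>2 * \<gamma> * e t - \<rho>2 * j t) (at t within {0..T})"
proof -
  obtain s e i j where init: "s 0 = s0" "e 0 = e0" "i 0 = i0" "j 0 = j0"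
    and ds: "\<And>t. t \<in> {0..T} \<Longrightarrow>
      (s has_real_derivative - clamped_incidence \<beta>1 \<beta>2 (s t) (i t) (j t)) (at t within {0..T})"
    and de: "\<And>t. t \<in> {0..T} \<Longrightarrow>
      (e has_real_derivative clamped_incidence \<beta>1 \<beta>2 (s t) (i t) (j t) - \<gamma> * e t) (at t within {0..T})"
    and di: "\<And>t. t \<in> {0..T} \<Longrightarrow>
      (i has_real_derivative \<sigma>1 * \<gamma> * e t - \<rho>1 * i t) (at t within {0..T})"
    and dj: "\<And>t. t \<in> {0..T} \<Longrightarrow>
      (j has_real_derivative \<sigma>2 * \<gamma> * e t - \<rho>2 * j t) (at t within {0..T})"
    by (rule seij_clamped_solution_exists[OF assms(1,2,9)]) blast
  have pos: "0 < s t \<and> 0 < e t \<and> 0 < i t \<and> 0 < j t" if "t \<in> {0..T}" for t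
    by (rule seij_positive[where M = "\<beta>1 + \<beta>2", OF assms(3,6,7) ds de di dj _ _ _ _ _ that])
      (use assms init clamped_incidence_bounds in auto)
  have "s t + e t + i t + j t \<le> 1" if "t \<in> {0..T}" for t
    using seij_total_le_initial[OF assms(8,4,5) ds de di dj _ that] pos init assms(14)
    by fastforce
  then have unclamped: "clamped_incidence \<beta>1 \<beta>2 (s t) (i t) (j t) = s t * (\<beta>1 * i t + \<beta>2 * j t)"
    if "t \<in> {0..T}" for t
    using pos[OF that] that by (intro clamped_incidence_unclamped) fastforce+
  show ?thesis
  proof (rule that)
    show "(s has_real_derivative - s t * (\<beta>1 * i t + \<beta>2 * j t)) (at t within {0..T})"
      and "(e has_real_derivative s t * (\<beta>1 * i t + \<beta>2 * j t) - \<gamma> * e t) (at t within {0..T})"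
      if "t \<in> {0..T}" for t
      using ds[OF that] de[OF that] by (simp_all add: unclamped[OF that])
  qed (use init di dj in auto)
qed

section \<open>Solutions of the SEIJRN system\<close>

lemma seijrn_solution_exists:
  fixes \<beta>1 \<beta>2 \<gamma> \<rho>1 \<rho>2 \<sigma>1 \<sigma>2 q T s0 e0 i0 j0 r0 :: real
  assumes "0 \<le> \<beta>1" "0 \<le> \<beta>2" "0 \<le> \<gamma>" "0 \<le> \<rho>1" "0 \<le> \<rho>2"
    and "0 \<le> \<sigma>1" "0 \<le> \<sigma>2" "\<sigma>1 + \<sigma>2 = 1" "0 \<le> T"
    and "0 < s0" "0 < e0" "0 < i0" "0 < j0" "s0 + e0 + i0 + j0 \<le> 1"
  shows "\<exists>s e i j r n. seijrn_solution \<beta>1 \<beta>2 \<gamma> \<rho>1 \<rho>2 \<sigma>1 \<sigma>2 q T s0 e0 i0 j0 r0 s e i j r n"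
proof -
  obtain s e i j where init: "s 0 = s0" "e 0 = e0" "i 0 = i0" "j 0 = j0"
    and ds: "\<And>t. t \<in> {0..T} \<Longrightarrow>
      (s has_real_derivative - s t * (\<beta>1 * i t + \<beta>2 * j t)) (at t within {0..T})"
    and de: "\<And>t. t \<in> {0..T} \<Longrightarrow>
      (e has_real_derivative s t * (\<beta>1 * i t + \<beta>2 * j t) - \<gamma> * e t) (at t within {0..T})"
    and di: "\<And>t. t \<in> {0..T} \<Longrightarrow>
      (i has_real_derivative \<sigma>1 * \<gamma> * e t - \<rho>1 * i t) (at t within {0..T})"
    and dj: "\<And>t. t \<in> {0..T} \<Longrightarrow>
      (j has_real_derivative \<sigma>2 * \<gamma> * e t - \<rho>2 * j t) (at t within {0..T})"
    by (rule seij_solution_exists[OF assms]) blast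
  define r where "r t = r0 + integral {0..t} (\<lambda>u. \<rho>1 * i u + (1 - q) * \<rho>2 * j u)" for t
  define n where "n t = 1 - integral {0..t} (\<lambda>u. q * \<rho>2 * j u)" for t
  have "continuous_on {0..T} i" "continuous_on {0..T} j"
    by (rule DERIV_continuous_on, erule di dj)+
  then have r_integrand: "continuous_on {0..T} (\<lambda>u. \<rho>1 * i u + (1 - q) * \<rho>2 * j u)"
    and n_integrand: "continuous_on {0..T} (\<lambda>u. q * \<rho>2 * j u)"
    by (auto intro!: continuous_intros)
  have dr: "(r has_real_derivative \<rho>1 * i t + (1 - q) * \<rho>2 * j t) (at t within {0..T})"
    and dn: "(n has_real_derivative - q * \<rho>2 * j t) (at t within {0..T})"
    if "t \<in> {0..T}" for t
    unfolding r_def[abs_def] n_def[abs_def]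
    using DERIV_add[OF DERIV_const integral_has_real_derivative[OF r_integrand that]]
      DERIV_diff[OF DERIV_const integral_has_real_derivative[OF n_integrand that]]
    by simp_all
  have "r 0 = r0" "n 0 = 1"
    by (simp_all add: r_def n_def)
  then have "seijrn_solution \<beta>1 \<beta>2 \<gamma> \<rho>1 \<rho>2 \<sigma>1 \<sigma>2 q T s0 e0 i0 j0 r0 s e i j r n"
    unfolding seijrn_solution_def using init ds de di dj dr dn by blast
  then show ?thesis by blast
qed

lemma seijrn_solution_total:
  assumes sol: "seijrn_solution \<beta>1 \<beta>2 \<gamma> \<rho>1 \<rho>2 \<sigma>1 \<sigma>2 q T s0 e0 i0 j0 r0 s e i j r n"
    and "\<sigma>1 + \<sigma>2 = 1" "s0 + e0 + i0 + j0 + r0 = 1" "t \<in> {0..T}"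
  shows "n t = s t + e t + i t + j t + r t"
proof -
  define D where "D t = n t - (s t + e t + i t + j t + r t)" for t
  have "(D has_real_derivative 0) (at u within {0..T})" if "u \<in> {0..T}" for u
  proof -
    have "(D has_real_derivative - q * \<rho>2 * j u - (- s u * (\<beta>1 * i u + \<beta>2 * j u)
        + (s u * (\<beta>1 * i u + \<beta>2 * j u) - \<gamma> * e u) + (\<sigma>1 * \<gamma> * e u - \<rho>1 * i u)
        + (\<sigma>2 * \<gamma> * e u - \<rho>2 * j u) + (\<rho>1 * i u + (1 - q) * \<rho>2 * j u))) (at u within {0..T})"
      using sol that unfolding D_def[abs_def] seijrn_solution_def
      by (intro derivative_intros) auto
    moreover have "\<sigma>1 * \<gamma> * e u + \<sigma>2 * \<gamma> * e u = \<gamma> * e u"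
      using assms(2) by (metis distrib_right mult_1 mult.assoc)
    ultimately show ?thesis
      by (simp add: algebra_simps)
  qed
  then obtain c where "\<forall>u\<in>{0..T}. D u = c"
    using has_field_derivative_zero_constant[of "{0..T}" D] by auto
  moreover have "D 0 = 0"
    using sol assms(3) by (simp add: D_def seijrn_solution_def)
  ultimately have "D t = 0"
    using assms(4) by force
  then show ?thesis by (simp add: D_def)
qed

lemma seijrn_solution_seij_positive:
  assumes sol: "seijrn_solution \<beta>1 \<beta>2 \<gamma> \<rho>1 \<rho>2 \<sigma>1 \<sigma>2 q T s0 e0 i0 j0 r0 s e i j r n"
    and "0 \<le> \<beta>1" "0 \<le> \<beta>2" "0 \<le> \<gamma>" "0 \<le> \<sigma>1" "0 \<le> \<sigma>2"
    and "0 < s0" "0 < e0" "0 < i0" "0 < j0" "t \<in> {0..T}"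
  shows "0 < s t \<and> 0 < e t \<and> 0 < i t \<and> 0 < j t"
proof -
  note sol' = sol[unfolded seijrn_solution_def]
  have ds: "(s has_real_derivative - s u * (\<beta>1 * i u + \<beta>2 * j u)) (at u within {0..T})"
    and de: "(e has_real_derivative s u * (\<beta>1 * i u + \<beta>2 * j u) - \<gamma> * e u) (at u within {0..T})"
    and di: "(i has_real_derivative \<sigma>1 * \<gamma> * e u - \<rho>1 * i u) (at u within {0..T})"
    and dj: "(j has_real_derivative \<sigma>2 * \<gamma> * e u - \<rho>2 * j u) (at u within {0..T})"
    if "u \<in> {0..T}" for u
    using sol' that by simp_all
  have init: "s 0 = s0" "e 0 = e0" "i 0 = i0" "j 0 = j0"
    using sol' by simp_all
  have "continuous_on {0..T} (\<lambda>u. \<beta>1 * i u + \<beta>2 * j u)"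
    by (intro continuous_intros; rule DERIV_continuous_on, erule di dj)
  then have "bounded ((\<lambda>u. \<beta>1 * i u + \<beta>2 * j u) ` {0..T})"
    by (intro compact_imp_bounded compact_continuous_image) auto
  then obtain M where M: "\<forall>u\<in>{0..T}. \<bar>\<beta>1 * i u + \<beta>2 * j u\<bar> \<le> M"
    by (auto simp: bounded_real)
  show ?thesis
  proof (rule seij_positive[where \<phi> = "\<lambda>u. s u * (\<beta>1 * i u + \<beta>2 * j u)" and M = M,
        OF assms(4,5,6) _ de di dj _ _ _ _ _ \<open>t \<in> {0..T}\<close>])
    show "(s has_real_derivative - (s u * (\<beta>1 * i u + \<beta>2 * j u))) (at u within {0..T})"
      if "u \<in> {0..T}" for u
      using ds[OF that] by simp
    show "0 \<le> s u * (\<beta>1 * i u + \<beta>2 * j u) \<and> s u * (\<beta>1 * i u + \<beta>2 * j u) \<le> M * s u"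
      if "u \<in> {0..T}" "0 < s u" "0 < i u" "0 < j u" for u
    proof -
      have "\<beta>1 * i u + \<beta>2 * j u \<le> M"
        using M that(1) by (auto simp: abs_le_iff)
      then show ?thesis
        using that assms(2,3) by (simp add: mult.commute)
    qed
  qed (use init assms in auto)
qed

lemma seijrn_solution_positive:
  assumes sol: "seijrn_solution \<beta>1 \<beta>2 \<gamma> \<rho>1 \<rho>2 \<sigma>1 \<sigma>2 q T s0 e0 i0 j0 r0 s e i j r n"
    and "0 \<le> \<beta>1" "0 \<le> \<beta>2" "0 \<le> \<gamma>" "0 < \<rho>1" "0 \<le> \<rho>2"
    and "0 \<le> \<sigma>1" "0 \<le> \<sigma>2" "\<sigma>1 + \<sigma>2 = 1" "q \<le> 1"
    and "0 < s0" "0 < e0" "0 < i0" "0 < j0" "0 \<le> r0" "s0 + e0 + i0 + j0 + r0 = 1"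
    and t: "t \<in> {0<..T}"
  shows "0 < s t \<and> 0 < e t \<and> 0 < i t \<and> 0 < j t \<and> 0 < r t \<and> 0 < n t"
proof -
  have seij: "0 < s u \<and> 0 < e u \<and> 0 < i u \<and> 0 < j u" if "u \<in> {0..T}" for u
    by (rule seijrn_solution_seij_positive[OF sol]) (use assms that in auto)
  have "r 0 < r t"
  proof (rule has_real_derivative_pos_imp_less[where a = 0 and b = T and x = 0 and y = t and
        f = r and f' = "\<lambda>u. \<rho>1 * i u + (1 - q) * \<rho>2 * j u"])
    show "(r has_real_derivative \<rho>1 * i u + (1 - q) * \<rho>2 * j u) (at u within {0..T})"
      if "u \<in> {0..T}" for u
      using sol that by (simp add: seijrn_solution_def)
    show "0 < \<rho>1 * i u + (1 - q) * \<rho>2 * j u" if "0 < u" "u < t" for u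
      using seij[of u] that t assms(5,6,10) by (auto intro!: add_pos_nonneg)
  qed (use t in auto)
  moreover have "n t = s t + e t + i t + j t + r t"
    using seijrn_solution_total[OF sol assms(9,16)] t by simp
  ultimately show ?thesis
    using seij[of t] t sol assms(15) by (auto simp: seijrn_solution_def)
qed

lemma seijrn_solution_n_le_one:
  assumes sol: "seijrn_solution \<beta>1 \<beta>2 \<gamma> \<rho>1 \<rho>2 \<sigma>1 \<sigma>2 q T s0 e0 i0 j0 r0 s e i j r n"
    and "0 \<le> q" "0 \<le> \<rho>2" "\<And>u. u \<in> {0<..T} \<Longrightarrow> 0 \<le> j u" "t \<in> {0..T}"
  shows "n t \<le> 1"
  using has_real_derivative_nonpos_imp_ge[of 0 T n "\<lambda>u. - q * \<rho>2 * j u" 0 t]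
    sol[unfolded seijrn_solution_def] assms
  by auto

lemma seijrn_solution_le_one:
  assumes sol: "seijrn_solution \<beta>1 \<beta>2 \<gamma> \<rho>1 \<rho>2 \<sigma>1 \<sigma>2 q T s0 e0 i0 j0 r0 s e i j r n"
    and "0 \<le> q" "0 \<le> \<rho>2" "\<sigma>1 + \<sigma>2 = 1" "s0 + e0 + i0 + j0 + r0 = 1"
    and pos: "\<And>u. u \<in> {0<..T} \<Longrightarrow> 0 < s u \<and> 0 < e u \<and> 0 < i u \<and> 0 < j u \<and> 0 < r u"
    and t: "t \<in> {0<..T}"
  shows "\<bar>s t\<bar> \<le> 1 \<and> \<bar>e t\<bar> \<le> 1 \<and> \<bar>i t\<bar> \<le> 1 \<and> \<bar>j t\<bar> \<le> 1 \<and> \<bar>r t\<bar> \<le> 1 \<and> \<bar>n t\<bar> \<le> 1"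
proof -
  have "t \<in> {0..T}" "\<And>u. u \<in> {0<..T} \<Longrightarrow> 0 \<le> j u"
    using t pos by (auto simp: less_imp_le)
  then have "n t \<le> 1" "n t = s t + e t + i t + j t + r t"
    using seijrn_solution_n_le_one[OF sol assms(2,3)] seijrn_solution_total[OF sol assms(4,5)]
    by blast+
  then show ?thesis
    using pos[OF t] by (simp add: abs_of_pos)
qed

theorem lemma1:
  fixes \<beta>1 \<beta>2 \<gamma> \<rho>1 \<rho>2 \<sigma>1 \<sigma>2 q T s0 e0 i0 j0 r0 :: real
  assumes "\<beta>1 > 0" "\<beta>2 > 0" "\<gamma> > 0" "\<rho>1 > 0" "\<rho>2 > 0"
    and "\<sigma>1 > 0" "\<sigma>2 > 0" "\<sigma>1 + \<sigma>2 = 1"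
    and "0 \<le> q" "q \<le> 1" "T > 0"
    and "s0 > 0" "e0 > 0" "i0 > 0" "j0 > 0" "r0 \<ge> 0"
    and "s0 + e0 + i0 + j0 + r0 = 1"
  shows "(\<exists>s e i j r n. seijrn_solution \<beta>1 \<beta>2 \<gamma> \<rho>1 \<rho>2 \<sigma>1 \<sigma>2 q T s0 e0 i0 j0 r0 s e i j r n)
    \<and> (\<forall>s e i j r n. seijrn_solution \<beta>1 \<beta>2 \<gamma> \<rho>1 \<rho>2 \<sigma>1 \<sigma>2 q T s0 e0 i0 j0 r0 s e i j r n \<longrightarrow>
          (\<forall>t\<in>{0<..T}. s t > 0 \<and> e t > 0 \<and> i t > 0 \<and> j t > 0 \<and> r t > 0 \<and> n t > 0) \<and>
          (\<exists>B. \<forall>t\<in>{0<..T}. \<bar>s t\<bar> \<le> B \<and> \<bar>e t\<bar> \<le> B \<and> \<bar>i t\<bar> \<le> B \<and>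
                              \<bar>j t\<bar> \<le> B \<and> \<bar>r t\<bar> \<le> B \<and> \<bar>n t\<bar> \<le> B))"
proof (intro conjI allI impI)
  show "\<exists>s e i j r n. seijrn_solution \<beta>1 \<beta>2 \<gamma> \<rho>1 \<rho>2 \<sigma>1 \<sigma>2 q T s0 e0 i0 j0 r0 s e i j r n"
    by (rule seijrn_solution_exists) (use assms in auto)
  fix s e i j r n
  assume sol: "seijrn_solution \<beta>1 \<beta>2 \<gamma> \<rho>1 \<rho>2 \<sigma>1 \<sigma>2 q T s0 e0 i0 j0 r0 s e i j r n"
  have pos: "0 < s t \<and> 0 < e t \<and> 0 < i t \<and> 0 < j t \<and> 0 < r t \<and> 0 < n t" if "t \<in> {0<..T}" for t
    by (rule seijrn_solution_positive[OF sol]) (use assms that in auto)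
  then show "\<forall>t\<in>{0<..T}. s t > 0 \<and> e t > 0 \<and> i t > 0 \<and> j t > 0 \<and> r t > 0 \<and> n t > 0"
    by blast
  have "\<bar>s t\<bar> \<le> 1 \<and> \<bar>e t\<bar> \<le> 1 \<and> \<bar>i t\<bar> \<le> 1 \<and> \<bar>j t\<bar> \<le> 1 \<and> \<bar>r t\<bar> \<le> 1 \<and> \<bar>n t\<bar> \<le> 1"
    if "t \<in> {0<..T}" for t
    using seijrn_solution_le_one[OF sol _ _ _ _ _ that] pos assms by simp
  then show "\<exists>B. \<forall>t\<in>{0<..T}. \<bar>s t\<bar> \<le> B \<and> \<bar>e t\<bar> \<le> B \<and> \<bar>i t\<bar> \<le> B \<and>
                              \<bar>j t\<bar> \<le> B \<and> \<bar>r t\<bar> \<le> B \<and> \<bar>n t\<bar> \<le> B"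
    by blast
qed

end
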